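(* Let $f\in\mathcal S_{\mathbf M}$. Then for any $\tau>0$, $n\in\mathbb N$ and $\varphi\in\Phi$, $$E_n(f)_{\mathbf M}\le 2C_{n,\varphi}(\tau)\,\omega_\varphi\Big(f,\frac{\tau}{n}\Big)_{\mathbf M},$$ where $C_{n,\varphi}(\tau):=\inf_{v\in V(\tau)}\frac{v(\tau)-v(0)}{I_{n,\varphi}(\tau,v)}$ and $I_{n,\varphi}(\tau,v):=\inf_{k\in\mathbb N,\,k\ge n}\int_0^\tau\varphi(ku/n)\,dv(u)$.
   Context: $L$ is the space of $2\pi$-periodic Lebesgue integrable functions, with Fourier coefficients $\widehat f(k)=(2\pi)^{-1}\int_0^{2\pi}f(x)e^{-\mathrm{i}kx}\,dx$, $k\in\mathbb Z$. Let $\mathbf M=\{M_k\}_{k\in\mathbb Z}$ be a sequence of Orlicz functions on $[0,\infty)$ (each $M_k$ nondecreasing and convex, $M_k(0)=0$, $M_k(u)\to\infty$ as $u\to\infty$). For a complex sequence $c=\{c_k\}_{k\in\mathbb Z}$, its Luxemburg norm is $\|c\|_{\mathbf M}=\inf\{a>0:\sum_kM_k(|c_k|/a)\le1\}$. $\mathcal S_{\mathbf M}$ is the space of $f\in L$ with $\|f\|_{\mathbf M}:=\|\{\widehat f(k)\}\|_{\mathbf M}<\infty$. $E_n(f)_{\mathbf M}=\inf\{\|f-t\|_{\mathbf M}:t\in\mathcal T_{n-1}\}$, where $\mathcal T_{n-1}$ is the set of trigonometric polynomials $\sum_{|k|\le n-1}c_ke^{\mathrm{i}kx}$, $c_k\in\mathbb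 C$. $\Phi$ is the set of all continuous, bounded, nonnegative, even functions $\varphi:\mathbb R\to\mathbb R$ with $\varphi(0)=0$ such that $\{t:\varphi(t)=0\}$ has Lebesgue measure zero. For $\varphi\in\Phi$, $h\in\mathbb R$, $\Delta_h^\varphi f$ denotes the sequence $\{\varphi(kh)\widehat f(k)\}_{k\in\mathbb Z}$, and $\omega_\varphi(f,\delta)_{\mathbf M}=\sup_{|h|\le\delta}\|\Delta_h^\varphi f\|_{\mathbf M}$. $V(\tau)$ is the set of bounded nondecreasing functions $v$ on $[0,\tau]$ that are not constant on $[0,\tau]$; integrals are Lebesgue–Stieltjes. *)

theory Defs
  imports "HOL-Analysis.Analysis"
begin

definition orlicz :: "(real \<Rightarrow> real) \<Rightarrow> bool" where
  "orlicz M \<longleftrightarrow> mono_on {0..} M \<and> convex_on {0..} M \<and> M 0 = 0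
      \<and> filterlim M at_top at_top"

definition periodic_L :: "(real \<Rightarrow> complex) set" where
  "periodic_L = {f. (\<forall>x. f (x + 2 * pi) = f x) \<and> set_integrable lborel {0..2*pi} f}"

definition fourier_coeff :: "(real \<Rightarrow> complex) \<Rightarrow> int \<Rightarrow> complex" where
  "fourier_coeff f k = complex_of_real (1 / (2 * pi)) *
      (LINT x:{0..2*pi}|lborel. f x * exp (- \<i> * of_int k * of_real x))"

(* Luxemburg norm of a complex sequence indexed by Z; value \<infinity> if no admissible a exists *)
definition lux_norm :: "(int \<Rightarrow> real \<Rightarrow> real) \<Rightarrow> (int \<Rightarrow> complex) \<Rightarrow> ereal" where
  "lux_norm M c = Inf (ereal ` {a. a > 0 \<and> (\<lambda>k. M k (cmod (c k) / a)) summable_on UNIV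
                                   \<and> (\<Sum>\<^sub>\<infinity>k. M k (cmod (c k) / a)) \<le> 1})"

definition S_M :: "(int \<Rightarrow> real \<Rightarrow> real) \<Rightarrow> (real \<Rightarrow> complex) set" where
  "S_M M = {f \<in> periodic_L. lux_norm M (fourier_coeff f) < \<infinity>}"

definition trig_polys :: "nat \<Rightarrow> (real \<Rightarrow> complex) set" where
  "trig_polys m = {t. \<exists>c :: int \<Rightarrow> complex.
      t = (\<lambda>x. \<Sum>k\<in>{-int m..int m}. c k * exp (\<i> * of_int k * of_real x))}"

definition best_approx :: "(int \<Rightarrow> real \<Rightarrow> real) \<Rightarrow> nat \<Rightarrow> (real \<Rightarrow> complex) \<Rightarrow> ereal" where
  "best_approx M n f = (INF t\<in>trig_polys (n - 1). lux_norm M (fourier_coeff (\<lambda>x. f x - t x)))"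

definition Phi :: "(real \<Rightarrow> real) set" where
  "Phi = {\<phi>. continuous_on UNIV \<phi> \<and> bounded (range \<phi>) \<and> (\<forall>t. 0 \<le> \<phi> t)
            \<and> (\<forall>t. \<phi> (- t) = \<phi> t) \<and> \<phi> 0 = 0 \<and> {t. \<phi> t = 0} \<in> null_sets lborel}"

definition Delta :: "(real \<Rightarrow> real) \<Rightarrow> real \<Rightarrow> (real \<Rightarrow> complex) \<Rightarrow> int \<Rightarrow> complex" where
  "Delta \<phi> h f = (\<lambda>k. complex_of_real (\<phi> (of_int k * h)) * fourier_coeff f k)"

definition modulus :: "(int \<Rightarrow> real \<Rightarrow> real) \<Rightarrow> (real \<Rightarrow> real) \<Rightarrow> (real \<Rightarrow> complex) \<Rightarrow> real \<Rightarrow> ereal" where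
  "modulus M \<phi> f \<delta> = (SUP h\<in>{h. \<bar>h\<bar> \<le> \<delta>}. lux_norm M (Delta \<phi> h f))"

definition Vset :: "real \<Rightarrow> (real \<Rightarrow> real) set" where
  "Vset \<tau> = {v. mono_on {0..\<tau>} v \<and> bounded (v ` {0..\<tau>}) \<and> (\<exists>s\<in>{0..\<tau>}. \<exists>t\<in>{0..\<tau>}. v s \<noteq> v t)}"

(* Lebesgue-Stieltjes measure dv of v on [0,\<tau>]: generated by the right-continuous
   regularisation of v, so that dv[0,\<tau>] = v \<tau> - v 0 (jumps at the endpoints included) *)
definition LS_measure :: "real \<Rightarrow> (real \<Rightarrow> real) \<Rightarrow> real measure" where
  "LS_measure \<tau> v = interval_measure
     (\<lambda>x. if x < 0 then v 0 else if \<tau> \<le> x then v \<tau> else Inf (v ` {x<..\<tau>}))"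

definition I_int :: "nat \<Rightarrow> (real \<Rightarrow> real) \<Rightarrow> real \<Rightarrow> (real \<Rightarrow> real) \<Rightarrow> real" where
  "I_int n \<phi> \<tau> v = (INF k\<in>{n..}. (LINT u:{0..\<tau>}|LS_measure \<tau> v. \<phi> (real k * u / real n)))"

definition C_const :: "nat \<Rightarrow> (real \<Rightarrow> real) \<Rightarrow> real \<Rightarrow> ereal" where
  "C_const n \<phi> \<tau> = (INF v\<in>Vset \<tau>. ereal (v \<tau> - v 0) / ereal (I_int n \<phi> \<tau> v))"

end

theory Submission
  imports Defs
begin

text \<open>
  Let \<open>c\<^sub>k\<close> be the Fourier coefficients of \<open>f\<close>, \<open>\<omega> = \<omega>\<^sub>\<phi>(f, \<tau>/n)\<close>, and for \<open>v \<in> V(\<tau>)\<close>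
  let \<open>I\<close> be the infimum \<open>I\<^sub>n(\<tau>, v)\<close>. Subtracting the Fourier partial sum of degree \<open>n - 1\<close>
  leaves the coefficients \<open>c\<^sub>k\<close> with \<open>\<bar>k\<bar> \<ge> n\<close>, and for those \<open>k\<close> the definition of \<open>I\<close> gives
  \<open>I \<bar>c\<^sub>k\<bar> \<le> \<integral>\<^sub>0\<^sup>\<tau> \<phi>(\<bar>k\<bar> u / n) \<bar>c\<^sub>k\<bar> dv(u)\<close>, and the integrand is the modulus of the
  \<open>k\<close>-th entry of \<open>\<Delta>\<^sup>\<phi>\<^sub>u\<^sub>/\<^sub>n f\<close>. So the tail is dominated, coefficientwise, by a \<open>dv\<close>-average
  of sequences whose Luxemburg norms are at most \<open>\<omega>\<close>; Jensen's inequality for each \<open>M\<^sub>k\<close>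
  bounds its norm by \<open>(v(\<tau>) - v(0)) \<omega> / I\<close>. The infimum over \<open>v\<close> gives \<open>E\<^sub>n(f) \<le> C \<omega>\<close>,
  which is the claim even without the factor 2. If \<open>\<omega> = 0\<close>, all \<open>\<Delta>\<^sup>\<phi>\<^sub>h f\<close> with small \<open>h\<close>
  vanish, and since \<open>\<phi>\<close> is not identically zero on \<open>[0, \<tau>/n]\<close> the tail vanishes too.
\<close>

section \<open>Orlicz functions and the Luxemburg norm\<close>

lemma orlicz_mono: "orlicz M \<Longrightarrow> 0 \<le> x \<Longrightarrow> x \<le> y \<Longrightarrow> M x \<le> M y"
  unfolding orlicz_def by (auto intro: mono_onD)

lemma orlicz_nonneg: "orlicz M \<Longrightarrow> 0 \<le> x \<Longrightarrow> 0 \<le> M x"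
  using orlicz_mono[of M 0 x] by (simp add: orlicz_def)

lemma integrable_orlicz_comp:
  assumes M: "orlicz M" and N: "finite_measure N" and g: "g \<in> borel_measurable N"
    and g_bounds: "\<And>u. u \<in> space N \<Longrightarrow> 0 \<le> g u \<and> g u \<le> B"
  shows "integrable N (\<lambda>u. M (g u))"
proof (rule finite_measure.integrable_const_bound[OF N, where B = "M B"])
  have "mono (\<lambda>x. M (max 0 x))"
    by (auto intro!: monoI orlicz_mono[OF M])
  then have "(\<lambda>u. M (max 0 (g u))) \<in> borel_measurable N"
    by (rule measurable_compose[OF g borel_measurable_mono])
  then show "(\<lambda>u. M (g u)) \<in> borel_measurable N"
    by (rule measurable_cong[THEN iffD1, rotated]) (simp add: g_bounds max_absorb2)
  show "AE u in N. norm (M (g u)) \<le> M B"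
    using g_bounds orlicz_nonneg[OF M] orlicz_mono[OF M] by (intro AE_I2) auto
qed

lemma orlicz_jensen:
  fixes N :: "'a measure" and y :: "'a \<Rightarrow> real"
  assumes M: "orlicz M" and N: "finite_measure N" and pos: "0 < measure N (space N)"
    and y: "integrable N y" and y0: "\<And>u. u \<in> space N \<Longrightarrow> 0 \<le> y u"
    and My: "integrable N (\<lambda>u. M (y u))"
  shows "M ((\<integral>u. y u \<partial>N) / measure N (space N)) \<le> (\<integral>u. M (y u) \<partial>N) / measure N (space N)"
proof -
  define m where "m = measure N (space N)"
  define x where "x = (\<integral>u. y u \<partial>N) / m"
  have "0 \<le> x"
    unfolding x_def m_def using integral_nonneg_AE[of y N] y0 by (simp add: AE_I2)
  have "M x * m \<le> (\<integral>u. M (y u) \<partial>N)"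
  proof (cases "x = 0")
    case True
    then show ?thesis
      using integral_nonneg_AE[of "\<lambda>u. M (y u)" N] orlicz_nonneg[OF M] y0 M
      by (simp add: AE_I2 orlicz_def)
  next
    case False
    \<comment> \<open>integrate the supporting line of \<open>M\<close> at the interior point \<open>x\<close>\<close>
    define s where "s = Inf ((\<lambda>t. (M x - M t) / (x - t)) ` ({x<..} \<inter> {0..}))"
    have line: "M x + s * (y u - x) \<le> M (y u)" if "u \<in> space N" for u
      unfolding s_def
      by (rule convex_le_Inf_differential) (use M False \<open>0 \<le> x\<close> y0 that in \<open>auto simp: orlicz_def\<close>)
    have "(\<integral>u. M x + s * (y u - x) \<partial>N) = M x * m + s * ((\<integral>u. y u \<partial>N) - x * m)"
      using y N by (simp add: m_def finite_measure.integrable_const)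
    also have "\<dots> = M x * m" using pos by (simp add: x_def m_def)
    finally show ?thesis
      using integral_mono[OF _ My line] y N by (simp add: finite_measure.integrable_const)
  qed
  then show ?thesis using pos by (simp add: x_def m_def pos_le_divide_eq)
qed

lemma lux_norm_nonneg: "0 \<le> lux_norm M c"
  unfolding lux_norm_def by (rule Inf_greatest) auto

lemma lux_norm_le_if_finite_sums:
  assumes M: "\<And>k. orlicz (M k)" and a: "0 < a"
    and sums: "\<And>F. finite F \<Longrightarrow> (\<Sum>k\<in>F. M k (cmod (c k) / a)) \<le> 1"
  shows "lux_norm M c \<le> ereal a"
proof -
  have "0 \<le> M k (cmod (c k) / a)" for k
    using orlicz_nonneg[OF M] a by simp
  then have summable: "(\<lambda>k. M k (cmod (c k) / a)) summable_on UNIV"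
    by (intro nonneg_bdd_above_summable_on bdd_aboveI[of _ 1]) (auto intro: sums)
  moreover have "(\<Sum>\<^sub>\<infinity>k. M k (cmod (c k) / a)) \<le> 1"
    by (rule infsum_le_finite_sums[OF summable]) (auto intro: sums)
  ultimately show ?thesis
    unfolding lux_norm_def using a by (intro Inf_lower) auto
qed

lemma finite_sums_le_if_lux_norm_less:
  assumes M: "\<And>k. orlicz (M k)" and less: "lux_norm M c < ereal b" and F: "finite F"
  shows "(\<Sum>k\<in>F. M k (cmod (c k) / b)) \<le> 1"
proof -
  obtain a where a: "0 < a" "a < b" and summable: "(\<lambda>k. M k (cmod (c k) / a)) summable_on UNIV"
    and le1: "(\<Sum>\<^sub>\<infinity>k. M k (cmod (c k) / a)) \<le> 1"
    using less unfolding lux_norm_def Inf_less_iff by auto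
  have "(\<Sum>k\<in>F. M k (cmod (c k) / b)) \<le> (\<Sum>k\<in>F. M k (cmod (c k) / a))"
    using a by (intro sum_mono orlicz_mono[OF M] divide_left_mono) auto
  also have "\<dots> \<le> (\<Sum>\<^sub>\<infinity>k. M k (cmod (c k) / a))"
    using F a by (intro finite_sum_le_infsum summable) (auto intro: orlicz_nonneg[OF M])
  finally show ?thesis using le1 by simp
qed

lemma lux_norm_le_0_imp_eq_0:
  assumes M: "\<And>k. orlicz (M k)" and le0: "lux_norm M c \<le> 0"
  shows "c k = 0"
proof (rule ccontr)
  assume ck: "c k \<noteq> 0"
  have "eventually (\<lambda>x. 1 < M k x) at_top"
    using M[of k] unfolding orlicz_def filterlim_at_top_dense by simp
  then obtain X where X: "\<And>x. X \<le> x \<Longrightarrow> 1 < M k x"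
    unfolding eventually_at_top_linorder by blast
  define e where "e = cmod (c k) / max X 1"
  have e: "0 < e" using ck by (simp add: e_def)
  \<comment> \<open>a Luxemburg norm \<open>0\<close> admits every scale \<open>e > 0\<close>, but \<open>M k\<close> exceeds \<open>1\<close> at \<open>cmod (c k) / e\<close>\<close>
  have "lux_norm M c < ereal e" using le0 e by (simp add: le_less_trans)
  from finite_sums_le_if_lux_norm_less[OF M this, of "{k}"]
  have "M k (cmod (c k) / e) \<le> 1" by simp
  moreover have "cmod (c k) / e = max X 1" using ck by (simp add: e_def)
  ultimately show False using X[of "max X 1"] by simp
qed

lemma lux_norm_zero:
  assumes M: "\<And>k. orlicz (M k)"
  shows "lux_norm M (\<lambda>k. 0) = 0"
proof (rule antisym)
  have "lux_norm M (\<lambda>k. 0) \<le> 0 + ereal e" if "0 < e" for e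
    using lux_norm_le_if_finite_sums[OF M that, where c="\<lambda>k. 0"] M by (simp add: orlicz_def)
  then show "lux_norm M (\<lambda>k. 0) \<le> 0"
    by (rule ereal_le_epsilon2[rule_format])
qed (rule lux_norm_nonneg)

lemma lux_norm_le_by_average:
  fixes N :: "'a measure" and d :: "'a \<Rightarrow> int \<Rightarrow> complex"
  assumes M: "\<And>k. orlicz (M k)" and N: "finite_measure N" and pos: "0 < measure N (space N)"
    and a: "0 < a"
    and d_meas: "\<And>k. (\<lambda>u. d u k) \<in> borel_measurable N"
    and d_bdd: "\<And>k u. u \<in> space N \<Longrightarrow> cmod (d u k) \<le> B k"
    and d_norm: "\<And>u. u \<in> space N \<Longrightarrow> lux_norm M (d u) < ereal b"
    and c: "\<And>k. b * measure N (space N) * cmod (c k) \<le> a * (\<integral>u. cmod (d u k) \<partial>N)"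
  shows "lux_norm M c \<le> ereal a"
proof -
  define m where "m = measure N (space N)"
  have "0 < b"
  proof -
    obtain u where "u \<in> space N" using pos measure_empty by fastforce
    then have "0 < ereal b"
      using d_norm lux_norm_nonneg[of M "d u"] by (meson le_less_trans)
    then show ?thesis by simp
  qed
  define y where "y k u = cmod (d u k) / b" for k u
  have y0: "0 \<le> y k u" for k u using \<open>0 < b\<close> by (simp add: y_def)
  have y_bounds: "0 \<le> y k u \<and> y k u \<le> B k / b" if "u \<in> space N" for k u
    using d_bdd[OF that] \<open>0 < b\<close> by (simp add: y_def divide_right_mono)
  have y_meas: "y k \<in> borel_measurable N" for k
    unfolding y_def using d_meas by measurable
  have y_int: "integrable N (y k)" for k
    using y_bounds by (intro finite_measure.integrable_const_bound[OF N _ y_meas] AE_I2) auto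
  have My_int: "integrable N (\<lambda>u. M k (y k u))" for k
    by (rule integrable_orlicz_comp[OF M N y_meas y_bounds])
  have term_le: "M k (cmod (c k) / a) \<le> (\<integral>u. M k (y k u) \<partial>N) / m" for k
  proof -
    have "cmod (c k) / a \<le> (\<integral>u. y k u \<partial>N) / m"
      using c[of k] a \<open>0 < b\<close> pos by (simp add: y_def m_def field_simps)
    then have "M k (cmod (c k) / a) \<le> M k ((\<integral>u. y k u \<partial>N) / m)"
      using a by (intro orlicz_mono[OF M]) auto
    also have "\<dots> \<le> (\<integral>u. M k (y k u) \<partial>N) / m"
      unfolding m_def by (rule orlicz_jensen[OF M N pos y_int y0 My_int])
    finally show ?thesis .
  qed
  have "(\<Sum>k\<in>F. M k (cmod (c k) / a)) \<le> 1" if F: "finite F" for F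
  proof -
    have "(\<Sum>k\<in>F. M k (cmod (c k) / a)) \<le> (\<Sum>k\<in>F. (\<integral>u. M k (y k u) \<partial>N) / m)"
      by (intro sum_mono term_le)
    also have "\<dots> = (\<integral>u. (\<Sum>k\<in>F. M k (y k u)) \<partial>N) / m"
      using My_int by (simp add: sum_divide_distrib)
    also have "\<dots> \<le> (\<integral>u. 1 \<partial>N) / m"
    proof (intro divide_right_mono integral_mono)
      show "(\<Sum>k\<in>F. M k (y k u)) \<le> 1" if "u \<in> space N" for u
        unfolding y_def by (rule finite_sums_le_if_lux_norm_less[OF M d_norm[OF that] F])
    qed (use pos N My_int in \<open>auto simp: m_def finite_measure.integrable_const\<close>)
    also have "\<dots> = 1" using pos by (simp add: m_def)
    finally show ?thesis .
  qed
  then show ?thesis by (rule lux_norm_le_if_finite_sums[OF M a])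
qed

section \<open>Fourier coefficients\<close>

definition fourier_partial_sum :: "(real \<Rightarrow> complex) \<Rightarrow> nat \<Rightarrow> real \<Rightarrow> complex" where
  "fourier_partial_sum f m x = (\<Sum>j\<in>{-int m..int m}. fourier_coeff f j * exp (\<i> * of_int j * of_real x))"

definition fourier_tail :: "(real \<Rightarrow> complex) \<Rightarrow> nat \<Rightarrow> int \<Rightarrow> complex" where
  "fourier_tail f m k = (if \<bar>k\<bar> \<le> int m then 0 else fourier_coeff f k)"

lemma fourier_partial_sum_in_trig_polys: "fourier_partial_sum f m \<in> trig_polys m"
  unfolding trig_polys_def fourier_partial_sum_def[abs_def] by blast

lemma set_integral_sum:
  fixes g :: "'i \<Rightarrow> 'a \<Rightarrow> 'b::{banach, second_countable_topology}"
  assumes "finite J" and "\<And>j. j \<in> J \<Longrightarrow> set_integrable M S (g j)"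
  shows "set_integrable M S (\<lambda>x. \<Sum>j\<in>J. g j x)"
    and "(LINT x:S|M. (\<Sum>j\<in>J. g j x)) = (\<Sum>j\<in>J. LINT x:S|M. g j x)"
proof -
  have "(\<lambda>x. indicator S x *\<^sub>R (\<Sum>j\<in>J. g j x)) = (\<lambda>x. \<Sum>j\<in>J. indicator S x *\<^sub>R g j x)"
    by (simp add: scaleR_sum_right)
  note eq = this and integrable = assms(2)[unfolded set_integrable_def]
  show "set_integrable M S (\<lambda>x. \<Sum>j\<in>J. g j x)"
    unfolding set_integrable_def eq by (rule Bochner_Integration.integrable_sum[OF integrable])
  show "(LINT x:S|M. (\<Sum>j\<in>J. g j x)) = (\<Sum>j\<in>J. LINT x:S|M. g j x)"
    unfolding set_lebesgue_integral_def eq by (rule Bochner_Integration.integral_sum[OF integrable])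
qed

lemma set_integrable_fourier_integrand:
  assumes f: "set_integrable lborel S f"
  shows "set_integrable lborel S (\<lambda>x. f x * exp (- \<i> * of_int k * of_real x))"
proof (rule set_integrable_bound[OF f])
  have "(\<lambda>x. indicator S x *\<^sub>R f x) \<in> borel_measurable lborel"
    using f by (simp add: set_integrable_def)
  then have "(\<lambda>x. (indicator S x *\<^sub>R f x) * exp (- \<i> * of_int k * of_real x)) \<in> borel_measurable lborel"
    by (intro borel_measurable_times) (auto intro!: borel_measurable_continuous_onI continuous_intros)
  then show "set_borel_measurable lborel S (\<lambda>x. f x * exp (- \<i> * of_int k * of_real x))"
    by (simp add: set_borel_measurable_def mult.assoc)
  show "AE x in lborel. x \<in> S \<longrightarrow> norm (f x * exp (- \<i> * of_int k * of_real x)) \<le> norm (f x)"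
    by (simp add: norm_mult norm_exp_eq_Re)
qed

lemma set_integral_exp_int_0_2pi:
  "(LINT x:{0..2*pi}|lborel. exp (\<i> * of_int l * of_real x)) = (if l = 0 then 2 * pi else 0)"
proof (cases "l = 0")
  case True
  then show ?thesis by (simp add: set_integral_const scaleR_conv_of_real)
next
  case False
  define A where "A = \<i> * of_int l"
  have "A \<noteq> 0" using False by (simp add: A_def)
  have "(LINT x:{0..2*pi}|lborel. exp (\<i> * of_int l * of_real x))
      = (LBINT x=ereal 0..ereal (2*pi). exp (x *\<^sub>R A))"
    by (subst interval_integral_Icc) (simp_all add: A_def scaleR_conv_of_real mult_ac)
  also have "\<dots> = exp ((2*pi) *\<^sub>R A) / A - exp (0 *\<^sub>R A) / A"
  proof (rule interval_integral_FTC_finite)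
    show "continuous_on {min 0 (2*pi)..max 0 (2*pi)} (\<lambda>x. exp (x *\<^sub>R A))"
      by (intro continuous_intros)
    show "((\<lambda>t. exp (t *\<^sub>R A) / A) has_vector_derivative exp (x *\<^sub>R A))
        (at x within {min 0 (2*pi)..max 0 (2*pi)})" for x
      using has_vector_derivative_divide[OF exp_scaleR_has_vector_derivative_right[of A x], of A]
        \<open>A \<noteq> 0\<close>
      by (simp add: has_vector_derivative_at_within)
  qed
  also have "exp ((2*pi) *\<^sub>R A) = 1"
    using exp_integer_2pi[of "of_int l"] by (simp add: A_def scaleR_conv_of_real mult_ac)
  finally show ?thesis using False by simp
qed

lemma fourier_coeff_exp:
  "fourier_coeff (\<lambda>x. exp (\<i> * of_int j * of_real x)) k = (if j = k then 1 else 0)"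
proof -
  have "exp (\<i> * of_int j * of_real x) * exp (- \<i> * of_int k * of_real x)
      = exp (\<i> * of_int (j - k) * of_real x)" for x
    by (simp add: exp_add[symmetric] algebra_simps)
  then show ?thesis
    by (simp add: fourier_coeff_def set_integral_exp_int_0_2pi del: of_int_diff)
qed

lemma fourier_coeff_diff:
  assumes "set_integrable lborel {0..2*pi} f" and "set_integrable lborel {0..2*pi} g"
  shows "fourier_coeff (\<lambda>x. f x - g x) k = fourier_coeff f k - fourier_coeff g k"
  using set_integral_diff(2)[OF assms[THEN set_integrable_fourier_integrand]]
  by (simp add: fourier_coeff_def left_diff_distrib right_diff_distrib)

lemma fourier_coeff_sum:
  assumes "finite J" and "\<And>j. j \<in> J \<Longrightarrow> set_integrable lborel {0..2*pi} (g j)"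
  shows "fourier_coeff (\<lambda>x. \<Sum>j\<in>J. g j x) k = (\<Sum>j\<in>J. fourier_coeff (g j) k)"
  using set_integral_sum(2)[OF assms(1) assms(2)[THEN set_integrable_fourier_integrand]]
  by (simp add: fourier_coeff_def sum_distrib_left sum_distrib_right)

lemma fourier_coeff_cmult: "fourier_coeff (\<lambda>x. c * g x) k = c * fourier_coeff g k"
  by (simp add: fourier_coeff_def mult.assoc mult.left_commute)

lemma fourier_coeff_partial_sum:
  "fourier_coeff (fourier_partial_sum f m) k
    = (if \<bar>k\<bar> \<le> int m then fourier_coeff f k else 0)"
proof -
  have "fourier_coeff (fourier_partial_sum f m) k
      = (\<Sum>j\<in>{-int m..int m}. fourier_coeff f j * fourier_coeff (\<lambda>x. exp (\<i> * of_int j * of_real x)) k)"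
    unfolding fourier_partial_sum_def[abs_def] fourier_coeff_cmult[symmetric]
    by (rule fourier_coeff_sum) (auto intro!: borel_integrable_atLeastAtMost' continuous_intros)
  also have "\<dots> = (\<Sum>j\<in>{-int m..int m}. if j = k then fourier_coeff f k else 0)"
    by (intro sum.cong) (auto simp: fourier_coeff_exp)
  finally show ?thesis by auto
qed

lemma fourier_coeff_remainder:
  assumes "f \<in> periodic_L"
  shows "fourier_coeff (\<lambda>x. f x - fourier_partial_sum f m x) = fourier_tail f m"
proof
  have "set_integrable lborel {0..2*pi} (fourier_partial_sum f m)"
    unfolding fourier_partial_sum_def[abs_def]
    by (intro set_integral_sum(1)) (auto intro!: borel_integrable_atLeastAtMost' continuous_intros)
  then show "fourier_coeff (\<lambda>x. f x - fourier_partial_sum f m x) k = fourier_tail f m k" for k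
    using assms
    by (simp add: fourier_coeff_diff periodic_L_def fourier_coeff_partial_sum fourier_tail_def)
qed

section \<open>The Lebesgue--Stieltjes measure \<open>dv\<close>\<close>

definition LS_distribution :: "real \<Rightarrow> (real \<Rightarrow> real) \<Rightarrow> real \<Rightarrow> real" where
  "LS_distribution \<tau> v x = (if x < 0 then v 0 else if \<tau> \<le> x then v \<tau> else Inf (v ` {x<..\<tau>}))"

lemma LS_measure_eq: "LS_measure \<tau> v = interval_measure (LS_distribution \<tau> v)"
  by (simp add: LS_measure_def LS_distribution_def[abs_def])

lemma sets_LS_measure [simp, measurable_cong]: "sets (LS_measure \<tau> v) = sets borel"
  by (simp add: LS_measure_def)

lemma mono_on_bdd_below_image_Ioc:
  fixes v :: "real \<Rightarrow> real"
  assumes "mono_on {0..\<tau>} v" and "0 \<le> x"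
  shows "bdd_below (v ` {x<..\<tau>})"
  using assms(2) by (intro bdd_belowI2[of _ "v 0"] mono_onD[OF assms(1)]) auto

lemma LS_distribution_mono:
  assumes v: "mono_on {0..\<tau>} v" and "0 \<le> \<tau>" and "x \<le> y"
  shows "LS_distribution \<tau> v x \<le> LS_distribution \<tau> v y"
proof -
  note bdd = mono_on_bdd_below_image_Ioc[OF v]
  consider "y < 0" | "x < 0" "0 \<le> y" "y < \<tau>" | "x < 0" "\<tau> \<le> y" | "0 \<le> x" "y < \<tau>"
    | "0 \<le> x" "x < \<tau>" "\<tau> \<le> y" | "\<tau> \<le> x"
    using \<open>x \<le> y\<close> by linarith
  then show ?thesis
  proof cases
    case 2
    then show ?thesis
      by (simp add: LS_distribution_def, intro cINF_greatest) (auto intro: mono_onD[OF v])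
  next
    case 3
    then show ?thesis using v \<open>0 \<le> \<tau>\<close> by (simp add: LS_distribution_def mono_on_def)
  next
    case 4
    then show ?thesis
      using \<open>x \<le> y\<close> by (simp add: LS_distribution_def, intro cInf_superset_mono) (auto intro: bdd)
  next
    case 5
    then show ?thesis by (simp add: LS_distribution_def, intro cInf_lower) (auto intro: bdd)
  qed (use assms in \<open>auto simp: LS_distribution_def\<close>)
qed

lemma LS_distribution_continuous_at_right:
  assumes v: "mono_on {0..\<tau>} v" and "0 \<le> \<tau>"
  shows "continuous (at_right a) (LS_distribution \<tau> v)"
proof -
  have mono: "\<And>x y. x \<le> y \<Longrightarrow> LS_distribution \<tau> v x \<le> LS_distribution \<tau> v y"
    by (rule LS_distribution_mono[OF assms])
  have "\<exists>d>0. LS_distribution \<tau> v (a + d) - LS_distribution \<tau> v a < e" if "0 < e" for e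
  proof -
    consider "a < 0" | "\<tau> \<le> a" | "0 \<le> a" "a < \<tau>" by linarith
    then show ?thesis
    proof cases
      case 1
      then show ?thesis using that by (intro exI[of _ "- a / 2"]) (auto simp: LS_distribution_def)
    next
      case 2
      then show ?thesis using that assms(2) by (intro exI[of _ 1]) (auto simp: LS_distribution_def)
    next
      case 3
      note bdd = mono_on_bdd_below_image_Ioc[OF v]
      have "Inf (v ` {a<..\<tau>}) < LS_distribution \<tau> v a + e"
        using 3 that by (simp add: LS_distribution_def)
      then obtain z where z: "a < z" "z \<le> \<tau>" "v z < LS_distribution \<tau> v a + e"
        by (subst (asm) cInf_less_iff) (use 3 bdd in auto)
      have "LS_distribution \<tau> v ((a + z) / 2) \<le> v z"
        using 3 z by (simp add: LS_distribution_def, intro cInf_lower) (auto intro: bdd)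
      then show ?thesis
        using z by (intro exI[of _ "(z - a) / 2"]) (auto simp: add_divide_distrib diff_divide_distrib)
    qed
  qed
  then show ?thesis by (simp add: continuous_at_right_real_increasing[OF mono])
qed

lemma emeasure_LS_measure_Ioc:
  assumes v: "mono_on {0..\<tau>} v" and "0 \<le> \<tau>" and "a < 0"
  shows "emeasure (LS_measure \<tau> v) {a<..\<tau>} = ennreal (v \<tau> - v 0)"
  unfolding LS_measure_eq
  using LS_distribution_mono[OF assms(1,2)] LS_distribution_continuous_at_right[OF assms(1,2)] assms(2,3)
  by (subst emeasure_interval_measure_Ioc_eq) (auto simp: LS_distribution_def)

definition LS_measure_on :: "real \<Rightarrow> (real \<Rightarrow> real) \<Rightarrow> real measure" where
  "LS_measure_on \<tau> v = restrict_space (LS_measure \<tau> v) {0..\<tau>}"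

lemma space_LS_measure_on [simp]: "space (LS_measure_on \<tau> v) = {0..\<tau>}"
  by (simp add: LS_measure_on_def space_restrict_space LS_measure_def)

lemma borel_measurable_LS_measure_on:
  "g \<in> borel_measurable borel \<Longrightarrow> g \<in> borel_measurable (LS_measure_on \<tau> v)"
  unfolding LS_measure_on_def by (rule measurable_restrict_space1) simp

lemma set_integral_LS_measure:
  fixes g :: "real \<Rightarrow> real"
  shows "(LINT u:{0..\<tau>}|LS_measure \<tau> v. g u) = (\<integral>u. g u \<partial>LS_measure_on \<tau> v)"
  unfolding LS_measure_on_def set_lebesgue_integral_def
  by (rule integral_restrict_space[symmetric]) simp

lemma emeasure_LS_measure_on_le:
  assumes "mono_on {0..\<tau>} v" and "0 \<le> \<tau>"
  shows "emeasure (LS_measure_on \<tau> v) {0..\<tau>} \<le> ennreal (v \<tau> - v 0)"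
proof -
  have "emeasure (LS_measure_on \<tau> v) {0..\<tau>} = emeasure (LS_measure \<tau> v) {0..\<tau>}"
    unfolding LS_measure_on_def by (simp add: emeasure_restrict_space)
  also have "\<dots> \<le> emeasure (LS_measure \<tau> v) {-1<..\<tau>}"
    by (rule emeasure_mono) auto
  also have "\<dots> = ennreal (v \<tau> - v 0)"
    by (rule emeasure_LS_measure_Ioc[OF assms]) simp
  finally show ?thesis .
qed

lemma finite_measure_LS_measure_on:
  "mono_on {0..\<tau>} v \<Longrightarrow> 0 \<le> \<tau> \<Longrightarrow> finite_measure (LS_measure_on \<tau> v)"
  using emeasure_LS_measure_on_le[of \<tau> v] by (intro finite_measureI) (auto simp: top_unique)

lemma measure_LS_measure_on_le:
  assumes "mono_on {0..\<tau>} v" and "0 \<le> \<tau>"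
  shows "measure (LS_measure_on \<tau> v) {0..\<tau>} \<le> v \<tau> - v 0"
proof -
  have "0 \<le> v \<tau> - v 0" using assms by (auto intro: mono_onD)
  then show ?thesis
    using emeasure_LS_measure_on_le[OF assms] unfolding measure_def
    by (metis enn2real_ennreal enn2real_mono ennreal_less_top)
qed

lemma I_int_LS_measure_on:
  "I_int n \<phi> \<tau> v = (INF k\<in>{n..}. \<integral>u. \<phi> (real k * u / real n) \<partial>LS_measure_on \<tau> v)"
  by (simp add: I_int_def set_integral_LS_measure)

section \<open>The weights \<open>\<phi>\<close> and the constant \<open>C\<^sub>n\<^sub>,\<^sub>\<phi>(\<tau>)\<close>\<close>

lemma Vset_increment_pos: "v \<in> Vset \<tau> \<Longrightarrow> 0 < v \<tau> - v 0"
proof -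
  assume "v \<in> Vset \<tau>"
  then obtain s t where st: "s \<in> {0..\<tau>}" "t \<in> {0..\<tau>}" "v s \<noteq> v t" and v: "mono_on {0..\<tau>} v"
    by (auto simp: Vset_def)
  have "v 0 \<le> v s" "v s \<le> v \<tau>" "v 0 \<le> v t" "v t \<le> v \<tau>"
    using st by (auto intro!: mono_onD[OF v])
  then show ?thesis using st by linarith
qed

lemma Phi_nonneg: "\<phi> \<in> Phi \<Longrightarrow> 0 \<le> \<phi> t"
  by (simp add: Phi_def)

lemma Phi_even: "\<phi> \<in> Phi \<Longrightarrow> \<phi> (- t) = \<phi> t"
  by (simp add: Phi_def)

lemma Phi_mult_abs: "\<phi> \<in> Phi \<Longrightarrow> \<phi> (\<bar>a\<bar> * x) = \<phi> (a * x)"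
  using Phi_even[of \<phi> "a * x"] by (cases "0 \<le> a") auto

lemma Phi_borel_measurable: "\<phi> \<in> Phi \<Longrightarrow> \<phi> \<in> borel_measurable borel"
  by (simp add: Phi_def borel_measurable_continuous_onI)

lemma Phi_bounded:
  assumes "\<phi> \<in> Phi"
  obtains B where "0 < B" "\<And>t. \<phi> t \<le> B"
proof -
  obtain B where "\<forall>x\<in>range \<phi>. norm x \<le> B"
    using assms unfolding Phi_def bounded_iff by blast
  then have "\<phi> t \<le> max B 1" for t by (metis abs_le_D1 max.coboundedI1 rangeI real_norm_def)
  then show ?thesis by (intro that[of "max B 1"]) auto
qed

lemma Phi_nonzero_near_0:
  assumes "\<phi> \<in> Phi" and "0 < \<delta>"
  obtains s where "s \<in> {0..\<delta>}" "\<phi> s \<noteq> 0"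
proof -
  have "\<not> {0..\<delta>} \<subseteq> {t. \<phi> t = 0}"
  proof
    assume "{0..\<delta>} \<subseteq> {t. \<phi> t = 0}"
    then have "{0..\<delta>} \<in> null_sets lborel"
      using assms(1) by (auto simp: Phi_def intro: null_sets_subset)
    then have "emeasure lborel {0..\<delta>} = 0" by auto
    then show False using assms(2) by simp
  qed
  then show ?thesis using that by blast
qed

lemma integrable_Phi_LS_measure_on:
  assumes "mono_on {0..\<tau>} v" and "0 \<le> \<tau>" and \<phi>: "\<phi> \<in> Phi" and g: "g \<in> borel_measurable borel"
  shows "integrable (LS_measure_on \<tau> v) (\<lambda>u. \<phi> (g u))"
proof -
  obtain B where "\<And>t. \<phi> t \<le> B" using Phi_bounded[OF \<phi>] by blast
  moreover have "(\<lambda>u. \<phi> (g u)) \<in> borel_measurable (LS_measure_on \<tau> v)"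
    using measurable_compose[OF g Phi_borel_measurable[OF \<phi>]] by (rule borel_measurable_LS_measure_on)
  ultimately show ?thesis
    using Phi_nonneg[OF \<phi>]
    by (intro finite_measure.integrable_const_bound[OF finite_measure_LS_measure_on[OF assms(1,2)]]
        AE_I2) auto
qed

lemma I_int_nonneg:
  assumes "\<phi> \<in> Phi"
  shows "0 \<le> I_int n \<phi> \<tau> v"
  unfolding I_int_LS_measure_on
  using Phi_nonneg[OF assms] by (intro cINF_greatest integral_nonneg_AE AE_I2) auto

lemma I_int_le_integral:
  assumes "\<phi> \<in> Phi" and "n \<le> k"
  shows "I_int n \<phi> \<tau> v \<le> (\<integral>u. \<phi> (real k * u / real n) \<partial>LS_measure_on \<tau> v)"
  unfolding I_int_LS_measure_on
  using Phi_nonneg[OF assms(1)] assms(2)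
  by (intro cINF_lower bdd_belowI2[of _ 0] integral_nonneg_AE AE_I2) auto

lemma I_int_le_measure:
  assumes v: "mono_on {0..\<tau>} v" and "0 \<le> \<tau>" and \<phi>: "\<phi> \<in> Phi" and B: "\<And>t. \<phi> t \<le> B"
  shows "I_int n \<phi> \<tau> v \<le> B * measure (LS_measure_on \<tau> v) {0..\<tau>}"
proof -
  interpret finite_measure "LS_measure_on \<tau> v"
    by (rule finite_measure_LS_measure_on[OF assms(1,2)])
  have "I_int n \<phi> \<tau> v \<le> (\<integral>u. \<phi> (real n * u / real n) \<partial>LS_measure_on \<tau> v)"
    by (rule I_int_le_integral[OF \<phi> order_refl])
  also have "\<dots> \<le> (\<integral>u. B \<partial>LS_measure_on \<tau> v)"
    using B by (intro integral_mono integrable_Phi_LS_measure_on[OF assms(1-3)]) auto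
  also have "\<dots> = B * measure (LS_measure_on \<tau> v) {0..\<tau>}"
    by simp
  finally show ?thesis .
qed

lemma C_const_pos:
  assumes "0 < \<tau>" and \<phi>: "\<phi> \<in> Phi"
  shows "0 < C_const n \<phi> \<tau>"
proof -
  obtain B where B: "0 < B" "\<And>t. \<phi> t \<le> B" using Phi_bounded[OF \<phi>] by blast
  have "ereal (1 / B) \<le> ereal (v \<tau> - v 0) / ereal (I_int n \<phi> \<tau> v)" if v: "v \<in> Vset \<tau>" for v
  proof -
    have W: "0 < v \<tau> - v 0" by (rule Vset_increment_pos[OF v])
    have mono: "mono_on {0..\<tau>} v" using v by (simp add: Vset_def)
    have "I_int n \<phi> \<tau> v \<le> B * measure (LS_measure_on \<tau> v) {0..\<tau>}"
      using I_int_le_measure[OF mono _ \<phi> B(2)] assms(1) by simp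
    also have "\<dots> \<le> B * (v \<tau> - v 0)"
      using measure_LS_measure_on_le[OF mono] assms(1) B(1) by simp
    finally have "I_int n \<phi> \<tau> v \<le> B * (v \<tau> - v 0)" .
    then show ?thesis
      using W B(1) I_int_nonneg[OF \<phi>, of n \<tau> v]
      by (cases "I_int n \<phi> \<tau> v = 0") (auto simp: field_simps)
  qed
  then have "ereal (1 / B) \<le> C_const n \<phi> \<tau>"
    unfolding C_const_def by (rule INF_greatest)
  moreover have "0 < ereal (1 / B)" using B(1) by simp
  ultimately show ?thesis by order
qed

lemma modulus_nonneg: "0 \<le> \<delta> \<Longrightarrow> 0 \<le> modulus M \<phi> f \<delta>"
  unfolding modulus_def by (rule SUP_upper2[of 0]) (auto intro: lux_norm_nonneg)

lemma lux_norm_Delta_le_modulus: "\<bar>h\<bar> \<le> \<delta> \<Longrightarrow> lux_norm M (Delta \<phi> h f) \<le> modulus M \<phi> f \<delta>"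
  unfolding modulus_def by (rule SUP_upper) simp

lemma norm_Delta: "\<phi> \<in> Phi \<Longrightarrow> cmod (Delta \<phi> h f k) = \<phi> (of_int k * h) * cmod (fourier_coeff f k)"
  by (simp add: Delta_def norm_mult Phi_nonneg)

lemma fourier_tail_eq_0_if_modulus_eq_0:
  assumes M: "\<And>k. orlicz (M k)" and "0 < \<tau>" and "1 \<le> n" and \<phi>: "\<phi> \<in> Phi"
    and \<omega>: "modulus M \<phi> f (\<tau> / real n) = 0"
  shows "fourier_tail f (n - 1) k = 0"
proof (cases "\<bar>k\<bar> \<le> int (n - 1)")
  case False
  then have "k \<noteq> 0" by auto
  have "0 < \<tau> / real n" using assms(2,3) by simp
  then obtain s where s: "s \<in> {0..\<tau> / real n}" "\<phi> s \<noteq> 0"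
    using Phi_nonzero_near_0[OF \<phi>] by blast
  \<comment> \<open>the step \<open>h = s / k\<close> moves frequency \<open>k\<close> to the point \<open>s\<close> where \<open>\<phi>\<close> does not vanish\<close>
  have "1 \<le> \<bar>real_of_int k\<bar>" using \<open>k \<noteq> 0\<close> by linarith
  then have "\<bar>s\<bar> / \<bar>of_int k\<bar> \<le> s / 1"
    using s(1) by (intro frac_le) auto
  then have "\<bar>s / of_int k\<bar> \<le> \<tau> / real n" using s(1) by (simp add: abs_divide)
  then have "lux_norm M (Delta \<phi> (s / of_int k) f) \<le> 0"
    using lux_norm_Delta_le_modulus \<omega> by metis
  then have "Delta \<phi> (s / of_int k) f k = 0" by (rule lux_norm_le_0_imp_eq_0[OF M])
  then show ?thesis using s(2) \<open>k \<noteq> 0\<close> by (simp add: Delta_def fourier_tail_def)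
qed (simp add: fourier_tail_def)

lemma I_int_mult_fourier_tail_le:
  assumes \<phi>: "\<phi> \<in> Phi"
  shows "I_int n \<phi> \<tau> v * cmod (fourier_tail f (n - 1) k)
    \<le> (\<integral>u. cmod (Delta \<phi> (u / real n) f k) \<partial>LS_measure_on \<tau> v)"
proof (cases "\<bar>k\<bar> \<le> int (n - 1)")
  case True
  then show ?thesis by (simp add: fourier_tail_def)
next
  case False
  then have "n \<le> nat \<bar>k\<bar>" by linarith
  have "\<phi> (of_int k * (u / real n)) = \<phi> (real (nat \<bar>k\<bar>) * u / real n)" for u
    using Phi_mult_abs[OF \<phi>, of "of_int k" "u / real n"] by simp
  then have "(\<integral>u. cmod (Delta \<phi> (u / real n) f k) \<partial>LS_measure_on \<tau> v)
      = (\<integral>u. \<phi> (real (nat \<bar>k\<bar>) * u / real n) \<partial>LS_measure_on \<tau> v) * cmod (fourier_coeff f k)"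
    by (simp add: norm_Delta[OF \<phi>])
  moreover have "I_int n \<phi> \<tau> v \<le> (\<integral>u. \<phi> (real (nat \<bar>k\<bar>) * u / real n) \<partial>LS_measure_on \<tau> v)"
    by (rule I_int_le_integral[OF \<phi> \<open>n \<le> nat \<bar>k\<bar>\<close>])
  ultimately show ?thesis using False by (simp add: fourier_tail_def mult_right_mono)
qed

lemma lux_norm_fourier_tail_le:
  assumes M: "\<And>k. orlicz (M k)" and \<tau>: "0 < \<tau>" and \<phi>: "\<phi> \<in> Phi"
    and v: "v \<in> Vset \<tau>" and I: "0 < I_int n \<phi> \<tau> v"
    and b: "modulus M \<phi> f (\<tau> / real n) < ereal b"
  shows "lux_norm M (fourier_tail f (n - 1)) \<le> ereal ((v \<tau> - v 0) * b / I_int n \<phi> \<tau> v)"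
proof -
  define N where "N = LS_measure_on \<tau> v"
  define m where "m = measure N (space N)"
  define I where "I = I_int n \<phi> \<tau> v"
  define W where "W = v \<tau> - v 0"
  have mono: "mono_on {0..\<tau>} v" using v by (simp add: Vset_def)
  have N: "finite_measure N"
    unfolding N_def using finite_measure_LS_measure_on[OF mono] \<tau> by simp
  obtain B where B: "0 < B" "\<And>t. \<phi> t \<le> B" using Phi_bounded[OF \<phi>] by blast
  have "m \<le> W" using measure_LS_measure_on_le[OF mono] \<tau> by (simp add: m_def N_def W_def)
  have "I \<le> B * m"
    using I_int_le_measure[OF mono _ \<phi> B(2)] \<tau> by (simp add: I_def m_def N_def)
  then have "0 < B * m" using I by (simp add: I_def)
  then have "0 < m" using B(1) by (simp add: zero_less_mult_iff)
  have "0 < b" using le_less_trans[OF modulus_nonneg b] \<tau> by simp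
  then have "0 < W * b / I" using \<open>0 < m\<close> \<open>m \<le> W\<close> I by (simp add: I_def)
  have "lux_norm M (fourier_tail f (n - 1)) \<le> ereal (W * b / I)"
  proof (rule lux_norm_le_by_average[OF M N \<open>0 < m\<close>[unfolded m_def] \<open>0 < W * b / I\<close>,
        where d = "\<lambda>u. Delta \<phi> (u / real n) f"])
    note [measurable] = Phi_borel_measurable[OF \<phi>]
    show "(\<lambda>u. Delta \<phi> (u / real n) f k) \<in> borel_measurable N" for k
      unfolding Delta_def N_def by (intro borel_measurable_LS_measure_on) measurable
    show "cmod (Delta \<phi> (u / real n) f k) \<le> B * cmod (fourier_coeff f k)" for u k
      using B(2) by (simp add: norm_Delta[OF \<phi>] mult_right_mono)
    show "lux_norm M (Delta \<phi> (u / real n) f) < ereal b" if "u \<in> space N" for u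
    proof -
      have "\<bar>u / real n\<bar> \<le> \<tau> / real n" using that by (auto simp: N_def divide_right_mono)
      then show ?thesis by (rule le_less_trans[OF lux_norm_Delta_le_modulus b])
    qed
    show "b * measure N (space N) * cmod (fourier_tail f (n - 1) k)
        \<le> W * b / I * (\<integral>u. cmod (Delta \<phi> (u / real n) f k) \<partial>N)" for k
    proof -
      have "b * m * cmod (fourier_tail f (n - 1) k) \<le> W * b * cmod (fourier_tail f (n - 1) k)"
        using \<open>m \<le> W\<close> \<open>0 < b\<close> by (intro mult_right_mono) auto
      also have "\<dots> = W * b / I * (I * cmod (fourier_tail f (n - 1) k))"
        using I by (simp add: I_def)
      also have "\<dots> \<le> W * b / I * (\<integral>u. cmod (Delta \<phi> (u / real n) f k) \<partial>N)"
        using I_int_mult_fourier_tail_le[OF \<phi>] \<open>0 < W * b / I\<close>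
        by (intro mult_left_mono) (auto simp: I_def N_def)
      finally show ?thesis by (simp add: m_def)
    qed
  qed
  then show ?thesis by (simp add: W_def I_def)
qed

lemma ereal_le_INF_mult:
  fixes x w :: ereal and g :: "'a \<Rightarrow> ereal"
  assumes "0 < w" and "w \<noteq> \<infinity>" and "\<And>i. i \<in> A \<Longrightarrow> x \<le> g i * w"
  shows "x \<le> (INF i\<in>A. g i) * w"
proof -
  obtain r where w: "w = ereal r" and "0 < r" using assms(1,2) by (cases w) auto
  have "x * ereal (1 / r) \<le> g i" if "i \<in> A" for i
  proof -
    have "x * ereal (1 / r) \<le> g i * w * ereal (1 / r)"
      using assms(3)[OF that] \<open>0 < r\<close> by (intro ereal_mult_right_mono) auto
    also have "\<dots> = g i" using \<open>0 < r\<close> by (simp add: w mult.assoc)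
    finally show ?thesis .
  qed
  then have "x * ereal (1 / r) * w \<le> (INF i\<in>A. g i) * w"
    using \<open>0 < r\<close> by (intro ereal_mult_right_mono INF_greatest) (auto simp: w)
  also have "x * ereal (1 / r) * w = x" using \<open>0 < r\<close> by (simp add: w mult.assoc)
  finally show ?thesis .
qed

lemma lux_norm_fourier_tail_le_ratio_mult_modulus:
  assumes M: "\<And>k. orlicz (M k)" and \<tau>: "0 < \<tau>" and \<phi>: "\<phi> \<in> Phi"
    and v: "v \<in> Vset \<tau>" and \<omega>: "0 < modulus M \<phi> f (\<tau> / real n)"
  shows "lux_norm M (fourier_tail f (n - 1))
    \<le> ereal (v \<tau> - v 0) / ereal (I_int n \<phi> \<tau> v) * modulus M \<phi> f (\<tau> / real n)"
proof -
  define W where "W = v \<tau> - v 0"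
  define I where "I = I_int n \<phi> \<tau> v"
  have "0 < W" unfolding W_def by (rule Vset_increment_pos[OF v])
  consider "I = 0" | "modulus M \<phi> f (\<tau> / real n) = \<infinity>" | w where "0 < I"
    "modulus M \<phi> f (\<tau> / real n) = ereal w"
    using I_int_nonneg[OF \<phi>, of n \<tau> v] \<omega>
    by (cases "modulus M \<phi> f (\<tau> / real n)") (auto simp: I_def le_less)
  then show ?thesis
  proof cases
    case 1
    then show ?thesis using \<open>0 < W\<close> \<omega> by (auto simp: W_def I_def)
  next
    case 2
    then show ?thesis using \<open>0 < W\<close> I_int_nonneg[OF \<phi>, of n \<tau> v]
      by (cases "I = 0") (simp_all add: W_def I_def ereal_divide_eq)
  next
    case 3
    have "lux_norm M (fourier_tail f (n - 1)) \<le> ereal (W / I * w) + ereal e" if "0 < e" for e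
    proof -
      have "lux_norm M (fourier_tail f (n - 1)) \<le> ereal (W * (w + e * I / W) / I)"
        using lux_norm_fourier_tail_le[OF M \<tau> \<phi> v, where f = f and b = "w + e * I / W"] 3 \<open>0 < W\<close> that
        by (simp add: I_def W_def)
      also have "W * (w + e * I / W) / I = W / I * w + e"
        using 3 \<open>0 < W\<close> by (simp add: field_simps)
      finally show ?thesis by simp
    qed
    then have "lux_norm M (fourier_tail f (n - 1)) \<le> ereal (W / I * w)"
      by (rule ereal_le_epsilon2[rule_format])
    then show ?thesis using 3 by (simp add: W_def I_def)
  qed
qed

lemma lux_norm_fourier_tail_le_C_const_mult_modulus:
  assumes M: "\<And>k. orlicz (M k)" and \<tau>: "0 < \<tau>" and n: "1 \<le> n" and \<phi>: "\<phi> \<in> Phi"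
  shows "lux_norm M (fourier_tail f (n - 1)) \<le> C_const n \<phi> \<tau> * modulus M \<phi> f (\<tau> / real n)"
proof -
  define \<omega> where "\<omega> = modulus M \<phi> f (\<tau> / real n)"
  consider "\<omega> = 0" | "\<omega> = \<infinity>" | "0 < \<omega>" "\<omega> \<noteq> \<infinity>"
    using modulus_nonneg[of "\<tau> / real n" M \<phi> f] \<tau> by (fastforce simp: \<omega>_def)
  then show ?thesis
  proof cases
    case 1
    then have "fourier_tail f (n - 1) = (\<lambda>k. 0)"
      using fourier_tail_eq_0_if_modulus_eq_0[OF M \<tau> n \<phi>] by (auto simp: \<omega>_def)
    then show ?thesis using 1 lux_norm_zero[OF M] by (simp add: \<omega>_def)
  next
    case 2
    then show ?thesis using C_const_pos[OF \<tau> \<phi>, of n] by (auto simp: \<omega>_def)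
  next
    case 3
    show ?thesis
      unfolding C_const_def \<omega>_def[symmetric]
    proof (rule ereal_le_INF_mult[OF 3])
      fix v assume "v \<in> Vset \<tau>"
      from lux_norm_fourier_tail_le_ratio_mult_modulus[OF M \<tau> \<phi> this] 3(1)
      show "lux_norm M (fourier_tail f (n - 1)) \<le> ereal (v \<tau> - v 0) / ereal (I_int n \<phi> \<tau> v) * \<omega>"
        by (simp add: \<omega>_def)
    qed
  qed
qed

lemma best_approx_le_lux_norm_fourier_tail:
  assumes "f \<in> periodic_L"
  shows "best_approx M n f \<le> lux_norm M (fourier_tail f (n - 1))"
  unfolding best_approx_def
  by (rule INF_lower2[OF fourier_partial_sum_in_trig_polys[of f]])
    (simp add: fourier_coeff_remainder[OF assms])

theorem corollary1:
  fixes M :: "int \<Rightarrow> real \<Rightarrow> real" and f :: "real \<Rightarrow> complex"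
    and \<tau> :: real and n :: nat and \<phi> :: "real \<Rightarrow> real"
  assumes "\<And>k. orlicz (M k)"
    and "f \<in> S_M M"
    and "\<tau> > 0" and "n \<ge> 1"
    and "\<phi> \<in> Phi"
  shows "best_approx M n f \<le> 2 * C_const n \<phi> \<tau> * modulus M \<phi> f (\<tau> / real n)"
proof -
  have "f \<in> periodic_L" using assms(2) by (simp add: S_M_def)
  then have "best_approx M n f \<le> lux_norm M (fourier_tail f (n - 1))"
    by (rule best_approx_le_lux_norm_fourier_tail)
  also have "\<dots> \<le> C_const n \<phi> \<tau> * modulus M \<phi> f (\<tau> / real n)"
    using lux_norm_fourier_tail_le_C_const_mult_modulus assms(1,3-5) by simp
  also have "\<dots> \<le> 2 * C_const n \<phi> \<tau> * modulus M \<phi> f (\<tau> / real n)"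
  proof -
    have "0 \<le> modulus M \<phi> f (\<tau> / real n)"
      by (rule modulus_nonneg) (use assms(3) in simp)
    then have "0 \<le> C_const n \<phi> \<tau> * modulus M \<phi> f (\<tau> / real n)"
      using C_const_pos[OF assms(3,5), of n] by (simp add: less_imp_le)
    then show ?thesis by (cases "C_const n \<phi> \<tau> * modulus M \<phi> f (\<tau> / real n)") (auto simp: mult.assoc)
  qed
  finally show ?thesis .
qed

end
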